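(* For all graphs $G$ and $H$, \[\chi_q(G \,\square\, H) = \max\{\chi_q(G), \chi_q(H)\}.\]
   Context: Graphs are finite, simple and undirected; no vertex is adjacent to itself. The Cartesian product $G \,\square\, H$ has vertex set $V(G)\times V(H)$, with $(u_1,v_1)\sim(u_2,v_2)$ iff ($u_1\sim u_2$ and $v_1=v_2$) or ($u_1=u_2$ and $v_1\sim v_2$). For a graph $H$ and integer $d\ge1$, the measurement graph $M(H,d)$ has as vertices all tuples $\mathbf{E}=(E_v)_{v\in V(H)}$ of orthogonal projectors $E_v\in\mathbb{C}^{d\times d}$ with $\sum_{v\in V(H)}E_v=I$; two vertices $\mathbf{E},\mathbf{E}'$ are adjacent iff $E_vE'_{v'}=0$ for all $v,v'\in V(H)$ with $v\not\sim v'$ (in particular for $v=v'$). A quantum homomorphism from $G$ to $H$ is a graph homomorphism from $G$ to $M(H,d)$ for some $d$. The quantum chromatic number $\chi_q(G)$ is the least $n$ such that there is a quantum homomorphism from $G$ to the complete graph $K_n$. *)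

theory Defs
  imports "Jordan_Normal_Form.Matrix"
begin

type_synonym 'a graph = "'a set \<times> ('a \<Rightarrow> 'a \<Rightarrow> bool)"

definition verts :: "'a graph \<Rightarrow> 'a set" where "verts G = fst G"
definition adj :: "'a graph \<Rightarrow> 'a \<Rightarrow> 'a \<Rightarrow> bool" where "adj G = snd G"

definition is_graph :: "'a graph \<Rightarrow> bool" where
  "is_graph G \<longleftrightarrow> finite (verts G)
     \<and> (\<forall>u v. adj G u v \<longrightarrow> u \<in> verts G \<and> v \<in> verts G)
     \<and> (\<forall>u v. adj G u v \<longrightarrow> adj G v u)
     \<and> (\<forall>u. \<not> adj G u u)"

definition cart_prod :: "'a graph \<Rightarrow> 'b graph \<Rightarrow> ('a \<times> 'b) graph" where
  "cart_prod G H = (verts G \<times> verts H,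
     \<lambda>(u1, v1) (u2, v2). (u1 \<in> verts G \<and> u2 \<in> verts G \<and> v1 \<in> verts H \<and> v2 \<in> verts H) \<and>
        ((adj G u1 u2 \<and> v1 = v2) \<or> (u1 = u2 \<and> adj H v1 v2)))"

definition complete_graph :: "nat \<Rightarrow> nat graph" where
  "complete_graph n = ({0..<n}, \<lambda>i j. i < n \<and> j < n \<and> i \<noteq> j)"

definition orth_proj :: "nat \<Rightarrow> complex mat \<Rightarrow> bool" where
  "orth_proj d P \<longleftrightarrow> P \<in> carrier_mat d d \<and> P * P = P \<and> transpose_mat (map_mat cnj P) = P"

definition mat_sum :: "nat \<Rightarrow> 'v set \<Rightarrow> ('v \<Rightarrow> complex mat) \<Rightarrow> complex mat" where
  "mat_sum d S f = mat d d (\<lambda>(i, j). \<Sum>v\<in>S. f v $$ (i, j))"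

(* vertices of the measurement graph M(H,d): tuples (E_v)_{v \<in> V(H)} of orthogonal
   projectors summing to the identity (entries outside V(H) are irrelevant). *)
definition meas_vertex :: "'b graph \<Rightarrow> nat \<Rightarrow> ('b \<Rightarrow> complex mat) \<Rightarrow> bool" where
  "meas_vertex H d E \<longleftrightarrow> (\<forall>v\<in>verts H. orth_proj d (E v)) \<and> mat_sum d (verts H) E = 1\<^sub>m d"

definition meas_adj :: "'b graph \<Rightarrow> nat \<Rightarrow> ('b \<Rightarrow> complex mat) \<Rightarrow> ('b \<Rightarrow> complex mat) \<Rightarrow> bool" where
  "meas_adj H d E E' \<longleftrightarrow> (\<forall>v\<in>verts H. \<forall>v'\<in>verts H. \<not> adj H v v' \<longrightarrow> E v * E' v' = 0\<^sub>m d d)"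

definition quantum_hom_d :: "'a graph \<Rightarrow> 'b graph \<Rightarrow> nat \<Rightarrow> ('a \<Rightarrow> 'b \<Rightarrow> complex mat) \<Rightarrow> bool" where
  "quantum_hom_d G H d f \<longleftrightarrow>
     (\<forall>u\<in>verts G. meas_vertex H d (f u))
     \<and> (\<forall>u u'. adj G u u' \<longrightarrow> meas_adj H d (f u) (f u'))"

definition quantum_hom :: "'a graph \<Rightarrow> 'b graph \<Rightarrow> bool" where
  "quantum_hom G H \<longleftrightarrow> (\<exists>d\<ge>1. \<exists>f. quantum_hom_d G H d f)"

definition chi_q :: "'a graph \<Rightarrow> nat" where
  "chi_q G = (LEAST n. quantum_hom G (complete_graph n))"

end

theory Submission
  imports Defs
begin

text \<open>Every layer \<open>G \<times> {v}\<close> of \<open>G \<box> H\<close> is a copy of \<open>G\<close>, which gives the lower bound.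
  For the upper bound recall the classical argument: if \<open>\<alpha>\<close> and \<open>\<beta>\<close> colour \<open>G\<close> and \<open>H\<close>
  with at most \<open>k\<close> colours, then \<open>(u, v) \<mapsto> \<alpha> u + \<beta> v mod k\<close> colours \<open>G \<box> H\<close>, because
  adjacent vertices differ in exactly one coordinate. Its quantum version measures at \<open>(u, v)\<close>
  the projectors \<open>\<Sum>\<^bsub>a + b \<equiv> c\<^esub> P\<^sup>u\<^sub>a \<otimes> Q\<^sup>v\<^sub>b\<close>. These form a projective measurement since the
  \<open>P\<^sup>u\<^sub>a \<otimes> Q\<^sup>v\<^sub>b\<close> do, and the edge conditions follow from the orthogonality of distinct
  projectors of a single measurement together with the cancellation law \<open>a + b \<equiv> a' + b \<Longrightarrow> a = a'\<close>
  for \<open>a, a' < k\<close>.\<close>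

section \<open>Sums of families of matrices\<close>

lemma index_mult_mat_sum [simp]:
  "i < dim_row A \<Longrightarrow> j < dim_col B \<Longrightarrow> dim_col A = dim_row B \<Longrightarrow>
    (A * B) $$ (i, j) = (\<Sum>k<dim_col A. A $$ (i, k) * B $$ (k, j))"
  by (auto simp: scalar_prod_def lessThan_atLeast0 intro!: sum.cong)

declare index_mult_mat(1) [simp del]

lemma mat_sum_carrier [simp]: "mat_sum d S F \<in> carrier_mat d d"
  by (simp add: mat_sum_def)

lemma dim_mat_sum [simp]: "dim_row (mat_sum d S F) = d" "dim_col (mat_sum d S F) = d"
  by (simp_all add: mat_sum_def)

lemma index_mat_sum [simp]:
  "i < d \<Longrightarrow> j < d \<Longrightarrow> mat_sum d S F $$ (i, j) = (\<Sum>s\<in>S. F s $$ (i, j))"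
  by (simp add: mat_sum_def)

lemma mat_sum_cong: "(\<And>s. s \<in> S \<Longrightarrow> F s = G s) \<Longrightarrow> mat_sum d S F = mat_sum d S G"
  unfolding mat_sum_def by (intro cong_mat refl) (auto intro!: sum.cong)

lemma mat_sum_zero: "(\<And>s. s \<in> S \<Longrightarrow> F s = 0\<^sub>m d d) \<Longrightarrow> mat_sum d S F = 0\<^sub>m d d"
  by (rule eq_matI) auto

lemma mult_mat_sum_left:
  assumes "A \<in> carrier_mat d d" "\<And>s. s \<in> S \<Longrightarrow> F s \<in> carrier_mat d d"
  shows "A * mat_sum d S F = mat_sum d S (\<lambda>s. A * F s)"
proof (rule eq_matI)
  fix i j assume "i < dim_row (mat_sum d S (\<lambda>s. A * F s))" "j < dim_col (mat_sum d S (\<lambda>s. A * F s))"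
  hence ij: "i < d" "j < d" by simp_all
  have "(A * mat_sum d S F) $$ (i, j) = (\<Sum>k<d. A $$ (i, k) * (\<Sum>s\<in>S. F s $$ (k, j)))"
    using ij assms by simp
  also have "\<dots> = (\<Sum>s\<in>S. \<Sum>k<d. A $$ (i, k) * F s $$ (k, j))"
    by (simp add: sum_distrib_left) (rule sum.swap)
  also have "\<dots> = mat_sum d S (\<lambda>s. A * F s) $$ (i, j)"
    using ij assms(1) assms(2)[THEN carrier_matD(1)] assms(2)[THEN carrier_matD(2)]
    by (auto intro!: sum.cong)
  finally show "(A * mat_sum d S F) $$ (i, j) = mat_sum d S (\<lambda>s. A * F s) $$ (i, j)" .
qed (use assms in auto)

lemma mult_mat_sum_right:
  assumes "A \<in> carrier_mat d d" "\<And>s. s \<in> S \<Longrightarrow> F s \<in> carrier_mat d d"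
  shows "mat_sum d S F * A = mat_sum d S (\<lambda>s. F s * A)"
proof (rule eq_matI)
  fix i j assume "i < dim_row (mat_sum d S (\<lambda>s. F s * A))" "j < dim_col (mat_sum d S (\<lambda>s. F s * A))"
  hence ij: "i < d" "j < d" by simp_all
  have "(mat_sum d S F * A) $$ (i, j) = (\<Sum>k<d. (\<Sum>s\<in>S. F s $$ (i, k)) * A $$ (k, j))"
    using ij assms by simp
  also have "\<dots> = (\<Sum>s\<in>S. \<Sum>k<d. F s $$ (i, k) * A $$ (k, j))"
    by (simp add: sum_distrib_right) (rule sum.swap)
  also have "\<dots> = mat_sum d S (\<lambda>s. F s * A) $$ (i, j)"
    using ij assms(1) assms(2)[THEN carrier_matD(1)] assms(2)[THEN carrier_matD(2)]
    by (auto intro!: sum.cong)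
  finally show "(mat_sum d S F * A) $$ (i, j) = mat_sum d S (\<lambda>s. F s * A) $$ (i, j)" .
qed (use assms in auto)

lemma mult_mat_sum_mat_sum:
  assumes "\<And>s. s \<in> S \<Longrightarrow> F s \<in> carrier_mat d d" "\<And>t. t \<in> T \<Longrightarrow> G t \<in> carrier_mat d d"
  shows "mat_sum d S F * mat_sum d T G = mat_sum d (S \<times> T) (\<lambda>(s, t). F s * G t)"
proof -
  have "mat_sum d S F * mat_sum d T G = mat_sum d S (\<lambda>s. F s * mat_sum d T G)"
    using assms by (simp add: mult_mat_sum_right)
  also have "\<dots> = mat_sum d S (\<lambda>s. mat_sum d T (\<lambda>t. F s * G t))"
    using assms by (intro mat_sum_cong mult_mat_sum_left) auto
  also have "\<dots> = mat_sum d (S \<times> T) (\<lambda>(s, t). F s * G t)"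
    by (rule eq_matI) (auto simp: sum.cartesian_product case_prod_beta)
  finally show ?thesis .
qed

lemma mult_mat_sum_eq_zero:
  assumes "\<And>s. s \<in> S \<Longrightarrow> F s \<in> carrier_mat d d" "\<And>t. t \<in> T \<Longrightarrow> G t \<in> carrier_mat d d"
    and "\<And>s t. s \<in> S \<Longrightarrow> t \<in> T \<Longrightarrow> F s * G t = 0\<^sub>m d d"
  shows "mat_sum d S F * mat_sum d T G = 0\<^sub>m d d"
  using assms by (auto simp: mult_mat_sum_mat_sum intro: mat_sum_zero)

lemma mat_sum_diagonal:
  assumes "finite S" "\<And>x y. x \<in> S \<Longrightarrow> y \<in> S \<Longrightarrow> x \<noteq> y \<Longrightarrow> F x y = 0\<^sub>m d d"
  shows "mat_sum d (S \<times> S) (\<lambda>(x, y). F x y) = mat_sum d S (\<lambda>x. F x x)"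
proof (rule eq_matI)
  fix i j assume "i < dim_row (mat_sum d S (\<lambda>x. F x x))" "j < dim_col (mat_sum d S (\<lambda>x. F x x))"
  hence ij: "i < d" "j < d" by simp_all
  have "(\<Sum>y\<in>S. F x y $$ (i, j)) = F x x $$ (i, j)" if "x \<in> S" for x
  proof -
    have "(\<Sum>y\<in>S. F x y $$ (i, j)) = (\<Sum>y\<in>S. if y = x then F x x $$ (i, j) else 0)"
      using assms(2)[of x] that ij by (intro sum.cong) auto
    also have "\<dots> = F x x $$ (i, j)" using that assms(1) by (simp add: sum.delta')
    finally show ?thesis .
  qed
  moreover have "(\<Sum>s\<in>S \<times> S. (case s of (x, y) \<Rightarrow> F x y) $$ (i, j)) = (\<Sum>x\<in>S. \<Sum>y\<in>S. F x y $$ (i, j))"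
    by (simp add: sum.cartesian_product split_def)
  ultimately show "mat_sum d (S \<times> S) (\<lambda>(x, y). F x y) $$ (i, j) = mat_sum d S (\<lambda>x. F x x) $$ (i, j)"
    using ij by simp
qed simp_all

lemma mat_sum_group:
  assumes "finite X" "finite C" "f ` X \<subseteq> C"
  shows "mat_sum d C (\<lambda>c. mat_sum d {x \<in> X. f x = c} F) = mat_sum d X F"
  by (rule eq_matI) (simp_all add: sum.group[OF assms])

section \<open>Kronecker products\<close>

lemma div_mod_less_of_less_mult:
  assumes "(i::nat) < d1 * d2" shows "i div d2 < d1" "i mod d2 < d2"
  using assms by (simp_all add: less_mult_imp_div_less) (cases "d2 = 0"; auto)

lemma bij_betw_div_mod: "bij_betw (\<lambda>k. (k div d2, k mod d2)) {..<d1 * d2} ({..<d1} \<times> {..<(d2::nat)})"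
proof (rule bij_betwI')
  show "(x div d2, x mod d2) = (y div d2, y mod d2) \<longleftrightarrow> x = y" for x y
    by (metis div_mult_mod_eq prod.inject)
  show "(x div d2, x mod d2) \<in> {..<d1} \<times> {..<d2}" if "x \<in> {..<d1 * d2}" for x
    using that div_mod_less_of_less_mult by auto
  show "\<exists>x\<in>{..<d1 * d2}. p = (x div d2, x mod d2)" if p_mem: "p \<in> {..<d1} \<times> {..<d2}" for p
  proof -
    obtain a b where p: "p = (a, b)" "a < d1" "b < d2" using p_mem by blast
    have "a * d2 + b < (a + 1) * d2" using p by simp
    also have "\<dots> \<le> d1 * d2" using p by (intro mult_le_mono1) simp
    finally show ?thesis using p by (intro bexI[of _ "a * d2 + b"]) simp_all
  qed
qed

lemma sum_div_mod: "(\<Sum>k<d1 * d2. h (k div d2) (k mod d2)) = (\<Sum>a<d1. \<Sum>b<(d2::nat). h a b)"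
  using sum.reindex_bij_betw[OF bij_betw_div_mod, of "case_prod h"]
  by (simp add: sum.cartesian_product)

definition kron :: "nat \<Rightarrow> nat \<Rightarrow> complex mat \<Rightarrow> complex mat \<Rightarrow> complex mat" where
  "kron d1 d2 A B =
     mat (d1 * d2) (d1 * d2) (\<lambda>(i, j). A $$ (i div d2, j div d2) * B $$ (i mod d2, j mod d2))"

lemma kron_carrier [simp]: "kron d1 d2 A B \<in> carrier_mat (d1 * d2) (d1 * d2)"
  by (simp add: kron_def)

lemma dim_kron [simp]: "dim_row (kron d1 d2 A B) = d1 * d2" "dim_col (kron d1 d2 A B) = d1 * d2"
  by (simp_all add: kron_def)

lemma index_kron [simp]: "i < d1 * d2 \<Longrightarrow> j < d1 * d2 \<Longrightarrow>
   kron d1 d2 A B $$ (i, j) = A $$ (i div d2, j div d2) * B $$ (i mod d2, j mod d2)"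
  by (simp add: kron_def)

lemma kron_mult:
  assumes "A \<in> carrier_mat d1 d1" "A' \<in> carrier_mat d1 d1" "B \<in> carrier_mat d2 d2" "B' \<in> carrier_mat d2 d2"
  shows "kron d1 d2 A B * kron d1 d2 A' B' = kron d1 d2 (A * A') (B * B')"
proof (rule eq_matI)
  fix i j assume "i < dim_row (kron d1 d2 (A * A') (B * B'))" "j < dim_col (kron d1 d2 (A * A') (B * B'))"
  hence ij: "i < d1 * d2" "j < d1 * d2" by simp_all
  note bounds = div_mod_less_of_less_mult[OF ij(1)] div_mod_less_of_less_mult[OF ij(2)]
  have "(kron d1 d2 A B * kron d1 d2 A' B') $$ (i, j) =
     (\<Sum>k<d1 * d2. (A $$ (i div d2, k div d2) * B $$ (i mod d2, k mod d2)) *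
                   (A' $$ (k div d2, j div d2) * B' $$ (k mod d2, j mod d2)))"
    using ij div_mod_less_of_less_mult by simp
  also have "\<dots> = (\<Sum>a<d1. \<Sum>b<d2. (A $$ (i div d2, a) * B $$ (i mod d2, b)) *
                                   (A' $$ (a, j div d2) * B' $$ (b, j mod d2)))"
    by (rule sum_div_mod)
  also have "\<dots> = (\<Sum>a<d1. A $$ (i div d2, a) * A' $$ (a, j div d2)) *
                  (\<Sum>b<d2. B $$ (i mod d2, b) * B' $$ (b, j mod d2))"
    by (simp add: sum_product ac_simps)
  also have "\<dots> = kron d1 d2 (A * A') (B * B') $$ (i, j)"
    using ij bounds assms by simp
  finally show "(kron d1 d2 A B * kron d1 d2 A' B') $$ (i, j) = kron d1 d2 (A * A') (B * B') $$ (i, j)" .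
qed auto

lemma kron_zero_left [simp]: "kron d1 d2 (0\<^sub>m d1 d1) B = 0\<^sub>m (d1 * d2) (d1 * d2)"
  by (rule eq_matI) (auto simp: div_mod_less_of_less_mult)

lemma kron_zero_right [simp]: "kron d1 d2 A (0\<^sub>m d2 d2) = 0\<^sub>m (d1 * d2) (d1 * d2)"
  by (rule eq_matI) (auto simp: div_mod_less_of_less_mult)

lemma kron_one [simp]: "kron d1 d2 (1\<^sub>m d1) (1\<^sub>m d2) = 1\<^sub>m (d1 * d2)"
proof (rule eq_matI)
  fix i j assume "i < dim_row (1\<^sub>m (d1 * d2))" "j < dim_col (1\<^sub>m (d1 * d2))"
  hence ij: "i < d1 * d2" "j < d1 * d2" by simp_all
  have "(i div d2 = j div d2 \<and> i mod d2 = j mod d2) = (i = j)"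
    by (metis div_mult_mod_eq)
  thus "kron d1 d2 (1\<^sub>m d1) (1\<^sub>m d2) $$ (i, j) = 1\<^sub>m (d1 * d2) $$ (i, j)"
    using ij div_mod_less_of_less_mult[OF ij(1)] div_mod_less_of_less_mult[OF ij(2)] by auto
qed auto

lemma mat_sum_kron:
  "mat_sum (d1 * d2) (S \<times> T) (\<lambda>(a, b). kron d1 d2 (F a) (G b)) =
   kron d1 d2 (mat_sum d1 S F) (mat_sum d2 T G)"
  by (rule eq_matI)
    (auto simp: div_mod_less_of_less_mult sum_product sum.cartesian_product case_prod_beta)

section \<open>Orthogonal projectors and projective measurements\<close>

lemma orth_projI:
  assumes "P \<in> carrier_mat d d" "P * P = P" "\<And>i j. i < d \<Longrightarrow> j < d \<Longrightarrow> cnj (P $$ (j, i)) = P $$ (i, j)"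
  shows "orth_proj d P"
proof -
  have "transpose_mat (map_mat cnj P) = P"
    by (rule eq_matI) (use assms(1,3) in auto)
  with assms(1,2) show ?thesis by (simp add: orth_proj_def)
qed

lemma orth_projD:
  assumes "orth_proj d P"
  shows orth_proj_carrier: "P \<in> carrier_mat d d"
    and orth_proj_idem: "P * P = P"
    and orth_proj_cnj_index: "\<And>i j. i < d \<Longrightarrow> j < d \<Longrightarrow> cnj (P $$ (j, i)) = P $$ (i, j)"
proof -
  show c: "P \<in> carrier_mat d d" and "P * P = P" using assms by (simp_all add: orth_proj_def)
  fix i j assume "i < d" "j < d"
  have "transpose_mat (map_mat cnj P) $$ (i, j) = P $$ (i, j)"
    using assms by (simp add: orth_proj_def)
  with c \<open>i < d\<close> \<open>j < d\<close> show "cnj (P $$ (j, i)) = P $$ (i, j)" by simp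
qed

lemma orth_proj_mult_index_adjoint:
  assumes "orth_proj d P" "orth_proj d Q" "i < d" "k < d"
  shows "(P * Q) $$ (i, k) = cnj ((Q * P) $$ (k, i))"
proof -
  have "(P * Q) $$ (i, k) = (\<Sum>l<d. cnj (Q $$ (k, l) * P $$ (l, i)))"
    using assms orth_projD[OF assms(1)] orth_projD[OF assms(2)]
    by (auto simp: mult.commute intro!: sum.cong)
  also have "\<dots> = cnj ((Q * P) $$ (k, i))"
    using assms orth_proj_carrier[OF assms(1)] orth_proj_carrier[OF assms(2)] by (simp add: cnj_sum)
  finally show ?thesis .
qed

text \<open>Since \<open>P Q P = (Q P)\<^sup>* (Q P)\<close>, its diagonal entries are squared column norms of \<open>Q P\<close>.\<close>

lemma orth_proj_sandwich_diagonal: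
  assumes P: "orth_proj d P" and Q: "orth_proj d Q" and i: "i < d"
  shows "(P * Q * P) $$ (i, i) = of_real (\<Sum>k<d. (cmod ((Q * P) $$ (k, i)))\<^sup>2)"
proof -
  note car = orth_proj_carrier[OF P] orth_proj_carrier[OF Q]
  have "P * Q * P = P * (Q * Q) * P" using orth_proj_idem[OF Q] by simp
  also have "\<dots> = (P * Q) * (Q * P)"
    using car by (simp add: assoc_mult_mat[of _ d d _ d _ d])
  finally have "(P * Q * P) $$ (i, i) = (\<Sum>k<d. (P * Q) $$ (i, k) * (Q * P) $$ (k, i))"
    using car i by simp
  also have "\<dots> = (\<Sum>k<d. cnj ((Q * P) $$ (k, i)) * (Q * P) $$ (k, i))"
    using orth_proj_mult_index_adjoint[OF P Q i] by simp
  also have "\<dots> = of_real (\<Sum>k<d. (cmod ((Q * P) $$ (k, i)))\<^sup>2)"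
    by (simp only: of_real_sum complex_norm_square mult.commute)
  finally show ?thesis .
qed

definition is_pvm :: "nat \<Rightarrow> 'x set \<Rightarrow> ('x \<Rightarrow> complex mat) \<Rightarrow> bool" where
  "is_pvm d A P \<longleftrightarrow> (\<forall>a\<in>A. orth_proj d (P a)) \<and> mat_sum d A P = 1\<^sub>m d"

lemma pvm_sandwich:
  assumes pvm: "is_pvm d A P" and a: "a \<in> A"
  shows "mat_sum d A (\<lambda>x. P a * P x * P a) = P a"
proof -
  have car: "\<And>x. x \<in> A \<Longrightarrow> P x \<in> carrier_mat d d"
    using pvm by (auto simp: is_pvm_def orth_proj_def)
  have "mat_sum d A (\<lambda>x. P a * P x * P a) = mat_sum d A (\<lambda>x. P a * P x) * P a"
    using car a by (intro mult_mat_sum_right[symmetric]) (auto intro: mult_carrier_mat)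
  also have "\<dots> = P a * mat_sum d A P * P a"
    using car a by (simp add: mult_mat_sum_left[symmetric])
  also have "\<dots> = P a * P a"
    using pvm car[OF a] by (simp add: is_pvm_def)
  also have "\<dots> = P a"
    using pvm a by (simp add: is_pvm_def orth_proj_def)
  finally show ?thesis .
qed

text \<open>By the sandwich identity each diagonal entry of \<open>P a\<close> is the sum over \<open>x \<in> A\<close> of the
  nonnegative squared column norms of \<open>P x * P a\<close>, and the term \<open>x = a\<close> alone already equals it.\<close>

lemma pvm_orthogonal:
  assumes fin: "finite A" and pvm: "is_pvm d A P" and a: "a \<in> A" and b: "b \<in> A" "b \<noteq> a"
  shows "P b * P a = 0\<^sub>m d d"
proof -
  have op: "\<And>x. x \<in> A \<Longrightarrow> orth_proj d (P x)" using pvm by (simp add: is_pvm_def)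
  have column_zero: "(P b * P a) $$ (k, i) = 0" if ki: "k < d" "i < d" for k i
  proof -
    define N where "N x = (\<Sum>k<d. (cmod ((P x * P a) $$ (k, i)))\<^sup>2)" for x
    have N_nonneg: "N x \<ge> 0" for x unfolding N_def by (intro sum_nonneg) simp
    have "of_real (\<Sum>x\<in>A. N x) = (\<Sum>x\<in>A. (P a * P x * P a) $$ (i, i))"
      using orth_proj_sandwich_diagonal[OF op[OF a] op ki(2)] by (simp add: N_def)
    also have "\<dots> = P a $$ (i, i)"
      using pvm_sandwich[OF pvm a] ki(2) by (metis index_mat_sum)
    also have "\<dots> = (P a * P a * P a) $$ (i, i)"
      using orth_proj_idem[OF op[OF a]] by simp
    also have "\<dots> = of_real (N a)"
      using orth_proj_sandwich_diagonal[OF op[OF a] op[OF a] ki(2)] by (simp add: N_def)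
    finally have "(\<Sum>x\<in>A. N x) = N a" by (simp only: of_real_eq_iff)
    hence "(\<Sum>x\<in>A - {a}. N x) = 0" using fin a by (simp add: sum.remove)
    hence "N b = 0" using fin b N_nonneg by (simp add: sum_nonneg_eq_0_iff)
    thus ?thesis using ki(1) by (simp add: N_def sum_nonneg_eq_0_iff)
  qed
  show ?thesis
    by (rule eq_matI) (use column_zero orth_proj_carrier[OF op[OF a]] orth_proj_carrier[OF op[OF b(1)]] in simp_all)
qed

lemma orth_proj_mat_sum:
  assumes "finite S" "\<And>x. x \<in> S \<Longrightarrow> orth_proj d (R x)"
    and "\<And>x y. x \<in> S \<Longrightarrow> y \<in> S \<Longrightarrow> x \<noteq> y \<Longrightarrow> R x * R y = 0\<^sub>m d d"
  shows "orth_proj d (mat_sum d S R)"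
proof (rule orth_projI)
  have "mat_sum d S R * mat_sum d S R = mat_sum d (S \<times> S) (\<lambda>(x, y). R x * R y)"
    using assms(2) by (intro mult_mat_sum_mat_sum) (auto dest: orth_proj_carrier)
  also have "\<dots> = mat_sum d S (\<lambda>x. R x * R x)"
    using assms(1,3) by (rule mat_sum_diagonal)
  also have "\<dots> = mat_sum d S R"
    using assms(2) by (intro mat_sum_cong) (auto dest: orth_proj_idem)
  finally show "mat_sum d S R * mat_sum d S R = mat_sum d S R" .
  show "cnj (mat_sum d S R $$ (j, i)) = mat_sum d S R $$ (i, j)" if "i < d" "j < d" for i j
    using that assms(2) by (auto simp: cnj_sum intro!: sum.cong dest: orth_proj_cnj_index)
qed simp

lemma orth_proj_kron:
  assumes A: "orth_proj d1 A" and B: "orth_proj d2 B"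
  shows "orth_proj (d1 * d2) (kron d1 d2 A B)"
proof (rule orth_projI)
  show "kron d1 d2 A B * kron d1 d2 A B = kron d1 d2 A B"
    using orth_projD[OF A] orth_projD[OF B] by (simp add: kron_mult)
  show "cnj (kron d1 d2 A B $$ (j, i)) = kron d1 d2 A B $$ (i, j)" if "i < d1 * d2" "j < d1 * d2" for i j
    using that div_mod_less_of_less_mult[OF that(1)] div_mod_less_of_less_mult[OF that(2)]
    by (simp add: orth_proj_cnj_index[OF A] orth_proj_cnj_index[OF B])
qed simp

lemma pvm_kron:
  assumes P: "is_pvm d1 A P" and Q: "is_pvm d2 B Q"
  shows "is_pvm (d1 * d2) (A \<times> B) (\<lambda>(a, b). kron d1 d2 (P a) (Q b))"
  using assms by (auto simp: is_pvm_def mat_sum_kron intro: orth_proj_kron)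

definition coarsen :: "nat \<Rightarrow> 'x set \<Rightarrow> ('x \<Rightarrow> 'c) \<Rightarrow> ('x \<Rightarrow> complex mat) \<Rightarrow> 'c \<Rightarrow> complex mat" where
  "coarsen d X f R c = mat_sum d {x \<in> X. f x = c} R"

lemma pvm_coarsen:
  assumes "finite X" "finite C" "f ` X \<subseteq> C" and pvm: "is_pvm d X R"
  shows "is_pvm d C (coarsen d X f R)"
  unfolding is_pvm_def
proof
  have op: "\<And>x. x \<in> X \<Longrightarrow> orth_proj d (R x)" using pvm by (simp add: is_pvm_def)
  show "\<forall>c\<in>C. orth_proj d (coarsen d X f R c)"
    unfolding coarsen_def using assms(1) op pvm_orthogonal[OF assms(1) pvm]
    by (auto intro: orth_proj_mat_sum)
  show "mat_sum d C (coarsen d X f R) = 1\<^sub>m d"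
    using pvm mat_sum_group[OF assms(1-3)] by (simp add: coarsen_def[abs_def] is_pvm_def)
qed

lemma coarsen_mult_eq_zero:
  assumes "\<And>x. x \<in> X \<Longrightarrow> R x \<in> carrier_mat d d" "\<And>x. x \<in> X \<Longrightarrow> R' x \<in> carrier_mat d d"
    and "\<And>x y. x \<in> X \<Longrightarrow> y \<in> X \<Longrightarrow> f x = c \<Longrightarrow> f y = c \<Longrightarrow> R x * R' y = 0\<^sub>m d d"
  shows "coarsen d X f R c * coarsen d X f R' c = 0\<^sub>m d d"
  unfolding coarsen_def using assms by (intro mult_mat_sum_eq_zero) auto

section \<open>Quantum colourings of Cartesian products\<close>

lemma add_mod_right_cancel_less:
  fixes a a' b k :: nat
  assumes "(a + b) mod k = (a' + b) mod k" "a < k" "a' < k"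
  shows "a = a'"
proof -
  have "(int a + int b) mod int k = (int a' + int b) mod int k"
    using assms(1) by (metis of_nat_add of_nat_mod)
  hence "(int a + int b - int b) mod int k = (int a' + int b - int b) mod int k"
    by (rule mod_diff_cong) simp
  thus ?thesis using assms(2,3) by (simp flip: of_nat_mod)
qed

text \<open>Quantum version of the colouring \<open>(u, v) \<mapsto> \<alpha> u + \<beta> v mod k\<close>.\<close>

definition sum_mod_meas ::
    "nat \<Rightarrow> nat \<Rightarrow> nat \<Rightarrow> nat \<Rightarrow> nat \<Rightarrow> (nat \<Rightarrow> complex mat) \<Rightarrow> (nat \<Rightarrow> complex mat) \<Rightarrow> nat \<Rightarrow> complex mat" where
  "sum_mod_meas d1 d2 n m k P Q =
     coarsen (d1 * d2) ({0..<n} \<times> {0..<m}) (\<lambda>(a, b). (a + b) mod k) (\<lambda>(a, b). kron d1 d2 (P a) (Q b))"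

lemma pvm_sum_mod_meas:
  assumes "is_pvm d1 {0..<n} P" "is_pvm d2 {0..<m} Q" "0 < k"
  shows "is_pvm (d1 * d2) {0..<k} (sum_mod_meas d1 d2 n m k P Q)"
  unfolding sum_mod_meas_def using assms
  by (intro pvm_coarsen pvm_kron) auto

lemma sum_mod_meas_mult_eq_zero:
  assumes "is_pvm d1 {0..<n} P" "is_pvm d1 {0..<n} P'" "is_pvm d2 {0..<m} Q" "is_pvm d2 {0..<m} Q'"
    and "\<And>a a' b b'. a < n \<Longrightarrow> a' < n \<Longrightarrow> b < m \<Longrightarrow> b' < m \<Longrightarrow> (a + b) mod k = (a' + b') mod k \<Longrightarrow>
           P a * P' a' = 0\<^sub>m d1 d1 \<or> Q b * Q' b' = 0\<^sub>m d2 d2"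
  shows "sum_mod_meas d1 d2 n m k P Q c * sum_mod_meas d1 d2 n m k P' Q' c = 0\<^sub>m (d1 * d2) (d1 * d2)"
proof -
  have car: "P a \<in> carrier_mat d1 d1" "P' a \<in> carrier_mat d1 d1" if "a < n" for a
    using assms(1,2) that by (auto simp: is_pvm_def dest: orth_proj_carrier)
  have car': "Q b \<in> carrier_mat d2 d2" "Q' b \<in> carrier_mat d2 d2" if "b < m" for b
    using assms(3,4) that by (auto simp: is_pvm_def dest: orth_proj_carrier)
  show ?thesis
    unfolding sum_mod_meas_def
  proof (rule coarsen_mult_eq_zero)
    fix x y assume "x \<in> {0..<n} \<times> {0..<m}" "y \<in> {0..<n} \<times> {0..<m}"
      "(\<lambda>(a, b). (a + b) mod k) x = c" "(\<lambda>(a, b). (a + b) mod k) y = c"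
    then obtain a b a' b' where ab: "x = (a, b)" "y = (a', b')" "a < n" "b < m" "a' < n" "b' < m"
      "(a + b) mod k = (a' + b') mod k" by auto
    then have "kron d1 d2 (P a) (Q b) * kron d1 d2 (P' a') (Q' b') = kron d1 d2 (P a * P' a') (Q b * Q' b')"
      using car car' by (simp add: kron_mult)
    also have "\<dots> = 0\<^sub>m (d1 * d2) (d1 * d2)"
      using assms(5)[OF ab(3,5,4,6,7)] by auto
    finally show "(\<lambda>(a, b). kron d1 d2 (P a) (Q b)) x * (\<lambda>(a, b). kron d1 d2 (P' a) (Q' b)) y
        = 0\<^sub>m (d1 * d2) (d1 * d2)"
      using ab by simp
  qed (use car car' in auto)
qed

lemma sum_mod_meas_mult_eq_zero_left:
  assumes P: "is_pvm d1 {0..<n} P" and P': "is_pvm d1 {0..<n} P'" and Q: "is_pvm d2 {0..<m} Q"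
    and orth: "\<And>a. a < n \<Longrightarrow> P a * P' a = 0\<^sub>m d1 d1" and "n \<le> k"
  shows "sum_mod_meas d1 d2 n m k P Q c * sum_mod_meas d1 d2 n m k P' Q c = 0\<^sub>m (d1 * d2) (d1 * d2)"
proof (rule sum_mod_meas_mult_eq_zero[OF P P' Q Q])
  fix a a' b b' assume ab: "a < n" "a' < n" "b < m" "b' < m" "(a + b) mod k = (a' + b') mod k"
  show "P a * P' a' = 0\<^sub>m d1 d1 \<or> Q b * Q b' = 0\<^sub>m d2 d2"
  proof (cases "b = b'")
    case True
    with ab \<open>n \<le> k\<close> have "a = a'" by (auto intro: add_mod_right_cancel_less)
    with orth ab show ?thesis by blast
  qed (use pvm_orthogonal[OF _ Q] ab in auto)
qed

lemma sum_mod_meas_mult_eq_zero_right: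
  assumes P: "is_pvm d1 {0..<n} P" and Q: "is_pvm d2 {0..<m} Q" and Q': "is_pvm d2 {0..<m} Q'"
    and orth: "\<And>b. b < m \<Longrightarrow> Q b * Q' b = 0\<^sub>m d2 d2" and "m \<le> k"
  shows "sum_mod_meas d1 d2 n m k P Q c * sum_mod_meas d1 d2 n m k P Q' c = 0\<^sub>m (d1 * d2) (d1 * d2)"
proof (rule sum_mod_meas_mult_eq_zero[OF P P Q Q'])
  fix a a' b b' assume ab: "a < n" "a' < n" "b < m" "b' < m" "(a + b) mod k = (a' + b') mod k"
  show "P a * P a' = 0\<^sub>m d1 d1 \<or> Q b * Q' b' = 0\<^sub>m d2 d2"
  proof (cases "a = a'")
    case True
    with ab \<open>m \<le> k\<close> have "b = b'"
      by (intro add_mod_right_cancel_less[of b a k b']) (simp_all add: add.commute)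
    with orth ab show ?thesis by blast
  qed (use pvm_orthogonal[OF _ P] ab in auto)
qed

lemma verts_complete_graph [simp]: "verts (complete_graph n) = {0..<n}"
  by (simp add: verts_def complete_graph_def)

lemma adj_complete_graph [simp]: "adj (complete_graph n) a b \<longleftrightarrow> a < n \<and> b < n \<and> a \<noteq> b"
  by (simp add: adj_def complete_graph_def)

lemma verts_cart_prod [simp]: "verts (cart_prod G H) = verts G \<times> verts H"
  by (simp add: verts_def cart_prod_def)

lemma adj_cart_prod [simp]:
  "adj (cart_prod G H) (u1, v1) (u2, v2) \<longleftrightarrow>
     (u1 \<in> verts G \<and> u2 \<in> verts G \<and> v1 \<in> verts H \<and> v2 \<in> verts H) \<and>
     ((adj G u1 u2 \<and> v1 = v2) \<or> (u1 = u2 \<and> adj H v1 v2))"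
  by (simp add: adj_def verts_def cart_prod_def)

lemma meas_vertex_iff_pvm: "meas_vertex H d E \<longleftrightarrow> is_pvm d (verts H) E"
  by (simp add: meas_vertex_def is_pvm_def)

lemma meas_adj_complete_graph: "meas_adj (complete_graph n) d E E' \<longleftrightarrow> (\<forall>a<n. E a * E' a = 0\<^sub>m d d)"
  by (auto simp: meas_adj_def)

lemma quantum_hom_d_cart_prod:
  assumes f: "quantum_hom_d G (complete_graph n) d1 f" and g: "quantum_hom_d H (complete_graph m) d2 g"
    and k: "n \<le> k" "m \<le> k" "0 < k"
  shows "quantum_hom_d (cart_prod G H) (complete_graph k) (d1 * d2)
           (\<lambda>(u, v). sum_mod_meas d1 d2 n m k (f u) (g v))"
proof -
  have f_pvm: "\<And>u. u \<in> verts G \<Longrightarrow> is_pvm d1 {0..<n} (f u)"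
    and g_pvm: "\<And>v. v \<in> verts H \<Longrightarrow> is_pvm d2 {0..<m} (g v)"
    using f g by (auto simp: quantum_hom_d_def meas_vertex_iff_pvm)
  have f_adj: "\<And>u u' a. adj G u u' \<Longrightarrow> a < n \<Longrightarrow> f u a * f u' a = 0\<^sub>m d1 d1"
    and g_adj: "\<And>v v' b. adj H v v' \<Longrightarrow> b < m \<Longrightarrow> g v b * g v' b = 0\<^sub>m d2 d2"
    using f g by (auto simp: quantum_hom_d_def meas_adj_complete_graph)
  show ?thesis
    unfolding quantum_hom_d_def
  proof (intro conjI ballI allI impI)
    fix x assume "x \<in> verts (cart_prod G H)"
    then show "meas_vertex (complete_graph k) (d1 * d2) ((\<lambda>(u, v). sum_mod_meas d1 d2 n m k (f u) (g v)) x)"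
      using f_pvm g_pvm k(3) by (auto simp: meas_vertex_iff_pvm intro: pvm_sum_mod_meas)
  next
    fix x y assume "adj (cart_prod G H) x y"
    then show "meas_adj (complete_graph k) (d1 * d2) ((\<lambda>(u, v). sum_mod_meas d1 d2 n m k (f u) (g v)) x)
        ((\<lambda>(u, v). sum_mod_meas d1 d2 n m k (f u) (g v)) y)"
      using f_pvm g_pvm f_adj g_adj k(1,2)
      by (cases x, cases y)
        (auto simp: meas_adj_complete_graph intro: sum_mod_meas_mult_eq_zero_left sum_mod_meas_mult_eq_zero_right)
  qed
qed

lemma quantum_hom_cart_prod:
  assumes "quantum_hom G (complete_graph n)" "quantum_hom H (complete_graph m)" "0 < max n m"
  shows "quantum_hom (cart_prod G H) (complete_graph (max n m))"
proof -
  obtain d1 f where d1: "d1 \<ge> 1" and f: "quantum_hom_d G (complete_graph n) d1 f"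
    using assms(1) by (auto simp: quantum_hom_def)
  obtain d2 g where d2: "d2 \<ge> 1" and g: "quantum_hom_d H (complete_graph m) d2 g"
    using assms(2) by (auto simp: quantum_hom_def)
  have "quantum_hom_d (cart_prod G H) (complete_graph (max n m)) (d1 * d2)
      (\<lambda>(u, v). sum_mod_meas d1 d2 n m (max n m) (f u) (g v))"
    using f g assms(3) by (intro quantum_hom_d_cart_prod) auto
  moreover have "d1 * d2 \<ge> 1" using d1 d2 by simp
  ultimately show ?thesis unfolding quantum_hom_def by blast
qed

lemma quantum_hom_cart_prod_restrict_left:
  assumes "quantum_hom (cart_prod G H) K" "verts H \<noteq> {}" "is_graph G"
  shows "quantum_hom G K"
proof -
  obtain d F where "d \<ge> 1" "quantum_hom_d (cart_prod G H) K d F"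
    using assms(1) by (auto simp: quantum_hom_def)
  moreover obtain v where "v \<in> verts H" using assms(2) by blast
  ultimately have "quantum_hom_d G K d (\<lambda>u. F (u, v))"
    using assms(3) unfolding quantum_hom_d_def is_graph_def by auto
  with \<open>d \<ge> 1\<close> show ?thesis by (auto simp: quantum_hom_def)
qed

lemma quantum_hom_cart_prod_restrict_right:
  assumes "quantum_hom (cart_prod G H) K" "verts G \<noteq> {}" "is_graph H"
  shows "quantum_hom H K"
proof -
  obtain d F where "d \<ge> 1" "quantum_hom_d (cart_prod G H) K d F"
    using assms(1) by (auto simp: quantum_hom_def)
  moreover obtain u where "u \<in> verts G" using assms(2) by blast
  ultimately have "quantum_hom_d H K d (\<lambda>v. F (u, v))"
    using assms(3) unfolding quantum_hom_d_def is_graph_def by auto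
  with \<open>d \<ge> 1\<close> show ?thesis by (auto simp: quantum_hom_def)
qed

lemma quantum_hom_complete_graph_pos:
  assumes "quantum_hom G (complete_graph n)" "verts G \<noteq> {}"
  shows "0 < n"
proof (rule ccontr)
  assume "\<not> 0 < n"
  obtain d f where "d \<ge> 1" "quantum_hom_d G (complete_graph n) d f"
    using assms(1) by (auto simp: quantum_hom_def)
  moreover obtain u where "u \<in> verts G" using assms(2) by blast
  ultimately have "mat_sum d {} (f u) $$ (0, 0) = 1\<^sub>m d $$ (0, 0)"
    using \<open>\<not> 0 < n\<close> by (simp add: quantum_hom_d_def meas_vertex_def)
  with \<open>d \<ge> 1\<close> show False by simp
qed

lemma quantum_hom_of_colouring:
  assumes "\<And>u. u \<in> verts G \<Longrightarrow> \<kappa> u < n" "\<And>u u'. adj G u u' \<Longrightarrow> \<kappa> u \<noteq> \<kappa> u'"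
  shows "quantum_hom G (complete_graph n)"
proof -
  define f where "f u c = (if c = \<kappa> u then 1\<^sub>m 1 else 0\<^sub>m 1 1 :: complex mat)" for u c
  have "orth_proj 1 (f u c)" for u c
    by (rule orth_projI) (auto simp: f_def)
  moreover have "mat_sum 1 {0..<n} (f u) = 1\<^sub>m 1" if u: "u \<in> verts G" for u
  proof (rule eq_matI)
    have "(\<Sum>c\<in>{0..<n}. f u c $$ (0, 0)) = (\<Sum>c\<in>{0..<n}. if c = \<kappa> u then 1 else 0)"
      by (intro sum.cong) (auto simp: f_def)
    with assms(1)[OF u] show "mat_sum 1 {0..<n} (f u) $$ (i, j) = 1\<^sub>m 1 $$ (i, j)"
      if "i < dim_row (1\<^sub>m 1)" "j < dim_col (1\<^sub>m 1)" for i j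
      using that by simp
  qed simp_all
  moreover have "f u c * f u' c = 0\<^sub>m 1 1" if "adj G u u'" for u u' c
    using assms(2)[OF that] by (auto simp: f_def)
  ultimately have "quantum_hom_d G (complete_graph n) 1 f"
    by (simp add: quantum_hom_d_def meas_vertex_iff_pvm is_pvm_def meas_adj_complete_graph)
  then show ?thesis by (auto simp: quantum_hom_def)
qed

lemma quantum_hom_complete_graph_card:
  assumes "is_graph G"
  shows "quantum_hom G (complete_graph (card (verts G)))"
proof -
  have "finite (verts G)" using assms by (simp add: is_graph_def)
  then obtain h where h: "bij_betw h (verts G) {0..<card (verts G)}"
    using ex_bij_betw_finite_nat by blast
  show ?thesis
  proof (rule quantum_hom_of_colouring[of _ h])
    show "\<And>u. u \<in> verts G \<Longrightarrow> h u < card (verts G)"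
      using h by (auto dest: bij_betw_apply)
    show "\<And>u u'. adj G u u' \<Longrightarrow> h u \<noteq> h u'"
      using h assms unfolding is_graph_def bij_betw_def inj_on_def by metis
  qed
qed

lemma chi_q_hom: "quantum_hom G (complete_graph n) \<Longrightarrow> quantum_hom G (complete_graph (chi_q G))"
  unfolding chi_q_def by (rule LeastI)

lemma chi_q_le: "quantum_hom G (complete_graph n) \<Longrightarrow> chi_q G \<le> n"
  unfolding chi_q_def by (rule Least_le)

theorem theorem7p2:
  fixes G :: "'a graph" and H :: "'b graph"
  assumes "is_graph G" and "is_graph H"
    and "verts G \<noteq> {}" and "verts H \<noteq> {}"
  shows "chi_q (cart_prod G H) = max (chi_q G) (chi_q H)"
proof -
  have G: "quantum_hom G (complete_graph (chi_q G))"
    using chi_q_hom quantum_hom_complete_graph_card assms(1) by blast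
  have H: "quantum_hom H (complete_graph (chi_q H))"
    using chi_q_hom quantum_hom_complete_graph_card assms(2) by blast
  have GH: "quantum_hom (cart_prod G H) (complete_graph (max (chi_q G) (chi_q H)))"
    using quantum_hom_cart_prod[OF G H] quantum_hom_complete_graph_pos[OF G assms(3)] by simp
  then have "quantum_hom (cart_prod G H) (complete_graph (chi_q (cart_prod G H)))"
    by (rule chi_q_hom)
  then have "chi_q G \<le> chi_q (cart_prod G H)" "chi_q H \<le> chi_q (cart_prod G H)"
    using assms by (auto intro: chi_q_le quantum_hom_cart_prod_restrict_left
        quantum_hom_cart_prod_restrict_right)
  moreover have "chi_q (cart_prod G H) \<le> max (chi_q G) (chi_q H)"
    using GH by (rule chi_q_le)
  ultimately show ?thesis by simp
qed

end
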